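(* Let $a\ge b\ge1$ be integers and define $c_j,d_j$ ($j\in\mathbb Z_+$) by $c_0=d_0=0$, $c_1=d_1=1$, $c_{k+2}+c_k=a d_{k+1}$, $d_{k+2}+d_k=b c_{k+1}$. Then both inequalities $$bc_{k+1}^2+ad_k^2-abc_{k+1}d_k+2ad_k-abc_{k+1}+a\le0,$$ $$bc_k^2+ad_{k+1}^2-abd_{k+1}c_k-abd_{k+1}+2bc_k+b\le0$$ hold (1) for all $k\ge0$ if $b\ge2$, and (2) for all $k\ge1$ if $b=1$ and $a\ge5$.
   Context: $\mathbb Z_+=\{0,1,2,\dots\}$. *)

theory Defs
  imports Main
begin

fun cd_seq :: "int \<Rightarrow> int \<Rightarrow> nat \<Rightarrow> int \<times> int" where
  "cd_seq a b 0 = (0, 0)"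
| "cd_seq a b (Suc 0) = (1, 1)"
| "cd_seq a b (Suc (Suc k)) =
     (a * snd (cd_seq a b (Suc k)) - fst (cd_seq a b k),
      b * fst (cd_seq a b (Suc k)) - snd (cd_seq a b k))"

definition cseq :: "int \<Rightarrow> int \<Rightarrow> nat \<Rightarrow> int" where
  "cseq a b k = fst (cd_seq a b k)"

definition dseq :: "int \<Rightarrow> int \<Rightarrow> nat \<Rightarrow> int" where
  "dseq a b k = snd (cd_seq a b k)"

end

theory Submission
  imports Defs
begin

text \<open>The binary form \<open>F(x, y) = b x\<^sup>2 - a b x y + a y\<^sup>2\<close> is invariant under both steps
  of the recurrence, so \<open>F(c(k+1), d(k))\<close> alternates between \<open>b\<close> and \<open>a\<close>, and the first
  inequality becomes \<open>F(c(k+1), d(k)) + a \<le> a (d(k+2) - d(k))\<close>. On each parity class \<open>d\<close> obeys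
  \<open>x(j+2) = (ab - 2) x(j+1) - x(j)\<close>, whose increments never decrease, so \<open>d(k+2) - d(k)\<close> is at
  least one of the first increments \<open>b\<close>, \<open>ab - 2\<close>, \<open>b (ab - 3)\<close>. Exchanging \<open>a\<close> and \<open>b\<close>
  exchanges \<open>c\<close> and \<open>d\<close> and turns the first inequality into the second.\<close>

lemma increment_mono_if_second_order_rec:
  fixes x :: "nat \<Rightarrow> 'a::linordered_idom"
  assumes rec: "\<And>j. x (j+2) = t * x (j+1) - x j" and t: "2 \<le> t"
    and "0 \<le> x 0" "x 0 \<le> x 1"
  shows "x 1 - x 0 \<le> x (j+1) - x j"
proof -
  have "0 \<le> x j \<and> x 1 - x 0 \<le> x (j+1) - x j"
  proof (induction j)
    case 0
    then show ?case using assms by simp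
  next
    case (Suc j)
    then have "0 \<le> x (j+1)" using \<open>x 0 \<le> x 1\<close> by simp
    then have "0 \<le> (t-2) * x (j+1)" using t by simp
    moreover have "x (j+2) - x (j+1) = (t-2) * x (j+1) + (x (j+1) - x j)"
      using rec[of j] by (simp add: algebra_simps)
    ultimately show ?case using Suc \<open>0 \<le> x (j+1)\<close> by simp
  qed
  then show ?thesis ..
qed

lemma cd_seq_swap: "cd_seq b a k = prod.swap (cd_seq a b k)"
  by (induction a b k rule: cd_seq.induct) (simp_all add: prod_eq_iff)

lemma cseq_swap: "cseq b a k = dseq a b k"
  and dseq_swap: "dseq b a k = cseq a b k"
  unfolding cseq_def dseq_def cd_seq_swap[of a b] by simp_all

lemma cseq_rec: "cseq a b (k+2) = a * dseq a b (k+1) - cseq a b k"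
  and dseq_rec: "dseq a b (k+2) = b * cseq a b (k+1) - dseq a b k"
  by (simp_all add: cseq_def dseq_def)

text \<open>Stated in simp normal form (\<open>1 = Suc 0\<close> is a simp rule); at the use sites
  \<open>add_2_eq_Suc'\<close> is disabled so that \<open>r + 2\<close> evaluates to a numeral.\<close>
lemma dseq_initial:
  "dseq a b 0 = 0" "dseq a b (Suc 0) = 1" "dseq a b 2 = b" "dseq a b 3 = a*b - 1"
  "dseq a b 4 = b * (a*b - 2)"
  by (simp_all add: cseq_def dseq_def numeral_eq_Suc algebra_simps)

lemma dseq_rec_step2: "dseq a b (k+4) = (a*b - 2) * dseq a b (k+2) - dseq a b k"
proof -
  have "dseq a b (k+4) = b * cseq a b (k+3) - dseq a b (k+2)"
    using dseq_rec[of a b "k+2"] by (simp add: numeral_eq_Suc)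
  also have "cseq a b (k+3) = a * dseq a b (k+2) - cseq a b (k+1)"
    using cseq_rec[of a b "k+1"] by (simp add: numeral_eq_Suc)
  also have "b * (a * dseq a b (k+2) - cseq a b (k+1)) - dseq a b (k+2)
      = a*b * dseq a b (k+2) - b * cseq a b (k+1) - dseq a b (k+2)"
    by (simp add: algebra_simps)
  also have "b * cseq a b (k+1) = dseq a b (k+2) + dseq a b k"
    using dseq_rec[of a b k] by simp
  finally show ?thesis by (simp add: algebra_simps)
qed

lemma dseq_increment_ge:
  assumes "4 \<le> a*b" "0 \<le> dseq a b r" "dseq a b r \<le> dseq a b (r+2)"
    and "r \<le> k" "even (k - r)"
  shows "dseq a b (r+2) - dseq a b r \<le> dseq a b (k+2) - dseq a b k"
proof -
  obtain j where k: "k = 2*j + r"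
    using \<open>r \<le> k\<close> \<open>even (k - r)\<close> by (metis evenE le_add_diff_inverse2)
  define x where "x i = dseq a b (2*i + r)" for i
  have "x 1 - x 0 \<le> x (j+1) - x j"
  proof (rule increment_mono_if_second_order_rec[where t = "a*b - 2"])
    fix i
    have "2*(i+2) + r = (2*i + r) + 4" "2*(i+1) + r = (2*i + r) + 2" by simp_all
    then show "x (i+2) = (a*b - 2) * x (i+1) - x i"
      unfolding x_def using dseq_rec_step2 by presburger
  qed (use assms in \<open>simp_all add: x_def\<close>)
  then show ?thesis by (simp add: x_def k)
qed

definition cd_form :: "int \<Rightarrow> int \<Rightarrow> int \<Rightarrow> int \<Rightarrow> int" where
  "cd_form a b x y = b*x^2 - a*b*x*y + a*y^2"

lemma cd_form_cd_seq:
  "cd_form a b (cseq a b (k+1)) (dseq a b k) = (if even k then b else a) \<and>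
   cd_form a b (cseq a b k) (dseq a b (k+1)) = (if even k then a else b)"
proof (induction k)
  case 0
  then show ?case by (simp add: cd_form_def cseq_def dseq_def)
next
  case (Suc k)
  have "cd_form a b (a * y - x) y = cd_form a b x y"
    and "cd_form a b x (b * x - y) = cd_form a b x y" for x y
    by (simp_all add: cd_form_def power2_eq_square algebra_simps)
  then show ?case
    using Suc cseq_rec[of a b k] dseq_rec[of a b k] by simp
qed

lemma cd_first_ineq:
  fixes a b :: int
  assumes "1 \<le> a" "1 \<le> b" and ab: "(2 \<le> a \<and> 2 \<le> b) \<or> (1 \<le> k \<and> 5 \<le> a*b)"
  defines "c \<equiv> cseq a b" and "d \<equiv> dseq a b"
  shows "b * (c (k+1))^2 + a * (d k)^2 - a*b*c (k+1) * d k + 2*a*d k - a*b*c (k+1) + a \<le> 0"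
proof -
  define \<Delta> where "\<Delta> = d (k+2) - d k"
  have "b * (c (k+1))^2 + a * (d k)^2 - a*b*c (k+1) * d k + 2*a*d k - a*b*c (k+1) + a
      = cd_form a b (c (k+1)) (d k) + a - a * \<Delta>"
    unfolding \<Delta>_def d_def c_def dseq_rec by (simp add: cd_form_def power2_eq_square algebra_simps)
  also have "\<dots> = (if even k then b else a) + a - a * \<Delta>"
    using cd_form_cd_seq[of a b k] by (simp add: c_def d_def)
  also have "\<dots> \<le> 0"
  proof -
    have "2*2 \<le> a*b" using ab mult_mono[of 2 a 2 b] by auto
    have "2 \<le> k" if "even k" "1 \<le> k" using that by (auto elim: evenE)
    then consider "odd k" | "even k" "2 \<le> a" "2 \<le> b" | "even k" "2 \<le> k" "5 \<le> a*b"
      using ab by blast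
    then show ?thesis
    proof cases
      case 1
      have "a*b - 2 \<le> \<Delta>"
        using dseq_increment_ge[of a b 1 k] 1 odd_pos[of k] \<open>2*2 \<le> a*b\<close>
        by (simp del: add_2_eq_Suc' add: \<Delta>_def d_def dseq_initial)
      then have "a*2 \<le> a*\<Delta>"
        using \<open>2*2 \<le> a*b\<close> \<open>1 \<le> a\<close> by (intro mult_left_mono) auto
      then show ?thesis using 1 by simp
    next
      case 2
      have "b \<le> \<Delta>"
        using dseq_increment_ge[of a b 0 k] 2 \<open>2*2 \<le> a*b\<close>
        by (simp del: add_2_eq_Suc' add: \<Delta>_def d_def dseq_initial)
      then have "a*b \<le> a*\<Delta>" using \<open>1 \<le> a\<close> by simp
      moreover have "1*1 \<le> (a-1)*(b-1)" using 2 by (intro mult_mono) auto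
      then have "a + b \<le> a*b" by (simp add: algebra_simps)
      ultimately have "b + a \<le> a*\<Delta>" by linarith
      then show ?thesis using 2 by simp
    next
      case 3
      have "b * (a*b - 3) \<le> \<Delta>"
        using dseq_increment_ge[of a b 2 k] 3 \<open>1 \<le> b\<close> mult_left_mono[of 1 "a*b - 2" b]
        by (simp del: add_2_eq_Suc' add: \<Delta>_def d_def dseq_initial algebra_simps)
      then have "a * (b * (a*b - 3)) \<le> a*\<Delta>" using \<open>1 \<le> a\<close> by (intro mult_left_mono) auto
      then have "(a*b) * (a*b - 3) \<le> a*\<Delta>" by (simp only: mult.assoc)
      moreover have "(a*b) * 2 \<le> (a*b) * (a*b - 3)" using 3 by (intro mult_left_mono) auto
      moreover have "0 \<le> (a-1)*(b-1)" using \<open>1 \<le> a\<close> \<open>1 \<le> b\<close> by simp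
      then have "b + a \<le> (a*b) * 2" using 3 by (simp add: algebra_simps)
      ultimately have "b + a \<le> a*\<Delta>" by linarith
      then show ?thesis using 3 by simp
    qed
  qed
  finally show ?thesis .
qed

theorem lemma4p4:
  fixes a b :: int
  assumes "a \<ge> b" and "b \<ge> 1"
  defines "c \<equiv> cseq a b" and "d \<equiv> dseq a b"
  shows "\<forall>k::nat. ((b \<ge> 2 \<and> k \<ge> 0) \<or> (b = 1 \<and> a \<ge> 5 \<and> k \<ge> 1)) \<longrightarrow>
           b * (c (k+1))^2 + a * (d k)^2 - a*b*c (k+1) * d k + 2*a*d k - a*b*c (k+1) + a \<le> 0
         \<and> b * (c k)^2 + a * (d (k+1))^2 - a*b*d (k+1) * c k - a*b*d (k+1) + 2*b*c k + b \<le> 0"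
proof (intro allI impI)
  fix k :: nat
  assume "(b \<ge> 2 \<and> k \<ge> 0) \<or> (b = 1 \<and> a \<ge> 5 \<and> k \<ge> 1)"
  then have hyp: "(2 \<le> a \<and> 2 \<le> b) \<or> (1 \<le> k \<and> 5 \<le> a*b)"
    using \<open>a \<ge> b\<close> by auto
  have "1 \<le> a" using assms by simp
  have hyp_swapped: "(2 \<le> b \<and> 2 \<le> a) \<or> (1 \<le> k \<and> 5 \<le> b*a)"
    using hyp by (simp add: mult.commute conj_commute)
  have "b * (c (k+1))^2 + a * (d k)^2 - a*b*c (k+1) * d k + 2*a*d k - a*b*c (k+1) + a \<le> 0"
    using cd_first_ineq[OF \<open>1 \<le> a\<close> \<open>b \<ge> 1\<close> hyp] by (simp only: c_def d_def)
  moreover have "a * (d (k+1))^2 + b * (c k)^2 - a*b*d (k+1) * c k + 2*b*c k - a*b*d (k+1) + b \<le> 0"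
    using cd_first_ineq[OF \<open>b \<ge> 1\<close> \<open>1 \<le> a\<close> hyp_swapped]
    by (simp only: c_def d_def cseq_swap[where a = a and b = b] dseq_swap[where a = a and b = b]
        mult.commute[of b a])
  ultimately show "b * (c (k+1))^2 + a * (d k)^2 - a*b*c (k+1) * d k + 2*a*d k - a*b*c (k+1) + a \<le> 0
      \<and> b * (c k)^2 + a * (d (k+1))^2 - a*b*d (k+1) * c k - a*b*d (k+1) + 2*b*c k + b \<le> 0"
    by linarith
qed

end
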